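(* Let $V$ be a finite set of variables and let $p$ be a probability distribution over $V$ faithful to an LWF chain graph $G$ with vertex set $V$, with all conditional independence queries answered correctly according to $p$. Then at the end of the skeleton recovery phase of the PC-like algorithm PC4LWF, the undirected graph $H$ has exactly the same adjacencies as $G$ (i.e. $H$ is the skeleton of $G$).
   Context: An LWF chain graph (CG) is a graph on a finite vertex set with directed ($\to$) and undirected ($-$) edges, at most one edge between two vertices, and no partially directed cycle (a cycle $v_1,\dots,v_n,v_{n+1}\equiv v_1$, $n\ge3$, of distinct vertices with each step $v_i-v_{i+1}$ or $v_i\to v_{i+1}$ and at least one step directed). Chain components are the connected components after deleting directed edges. $bd(A)$ is the set of parents or neighbours of vertices of $A$ outside $A$; $An(A)$ is the smallest set $B\supseteq A$ with $bd(b)\subseteq B$ for all $b\in B$. The moral graph $G^m$ joins $\alpha,\beta$ iff they are adjacent in $G$ or $\alpha\to\gamma_1$, $\beta\to\gamma_2$ for some $\gamma_1,\gamma_2$ in one chain component. For disjoint $A,B,S$, $S$ c-separates $A$ from $B$ if it separates them in $(G_{An(A\cup B\cup S)})^m$. $p$ is faithful to $G$ if $A\perp\!\!\!\perp B\mid S$ in $p$ iff $S$ c-separates $A$ from $B$ in $G$. Skeleton recovery of PC4LWF: let $H$ be the complete undirected graph on $V$. For $i=0,1,\dots,|V|-2$: while possible, select any ordered pair $(u,v)$ of vertices adjacent in the current $H$ with $|ad_H(u)\setminus\{v\}|\ge i$, where $ad_H(x)$ is the current set of vertices adjacent to $x$ in $H$; if there exists $S\subseteq ad_H(u)\setminus\{v\}$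 with $|S|=i$ and $u\perp\!\!\!\perp v\mid S$ in $p$, set $S_{uv}=S_{vu}=S$ and remove the edge $u-v$ from $H$. *)

theory Defs
  imports Main
begin

(* A chain graph on vertex set V is given by a set D of directed edges
   ((u,v) \<in> D means u \<rightarrow> v) and a symmetric set U of undirected edges
   ((u,v) \<in> U and (v,u) \<in> U both mean u - v). *)

definition has_pd_cycle :: "('a \<times> 'a) set \<Rightarrow> ('a \<times> 'a) set \<Rightarrow> bool" where
  "has_pd_cycle D U \<longleftrightarrow>
     (\<exists>vs. length vs \<ge> 3 \<and> distinct vs \<and>
        (\<forall>i<length vs. (vs!i, vs!((i+1) mod length vs)) \<in> U \<or>
                         (vs!i, vs!((i+1) mod length vs)) \<in> D) \<and>
        (\<exists>i<length vs. (vs!i, vs!((i+1) mod length vs)) \<in> D))"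

definition lwf_cg :: "'a set \<Rightarrow> ('a \<times> 'a) set \<Rightarrow> ('a \<times> 'a) set \<Rightarrow> bool" where
  "lwf_cg V D U \<longleftrightarrow>
     D \<subseteq> V \<times> V \<and> U \<subseteq> V \<times> V \<and> sym U \<and>
     (\<forall>v. (v,v) \<notin> D \<and> (v,v) \<notin> U) \<and>
     (\<forall>u v. (u,v) \<in> D \<longrightarrow> (v,u) \<notin> D \<and> (u,v) \<notin> U) \<and>
     \<not> has_pd_cycle D U"

definition bd :: "('a \<times> 'a) set \<Rightarrow> ('a \<times> 'a) set \<Rightarrow> 'a set \<Rightarrow> 'a set" where
  "bd D U A = {b. b \<notin> A \<and> (\<exists>a\<in>A. (b,a) \<in> D \<or> (b,a) \<in> U)}"

definition An :: "('a \<times> 'a) set \<Rightarrow> ('a \<times> 'a) set \<Rightarrow> 'a set \<Rightarrow> 'a set" where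
  "An D U A = \<Inter>{B. A \<subseteq> B \<and> (\<forall>b\<in>B. bd D U {b} \<subseteq> B)}"

text \<open>Edge set of the moral graph of the chain graph (W, D, U); gamma1, gamma2 lie
  in one chain component iff they are connected by undirected edges.\<close>
definition moral_edges :: "'a set \<Rightarrow> ('a \<times> 'a) set \<Rightarrow> ('a \<times> 'a) set \<Rightarrow> ('a \<times> 'a) set" where
  "moral_edges W D U = {(a,b). a \<in> W \<and> b \<in> W \<and> a \<noteq> b \<and>
      ((a,b) \<in> D \<or> (b,a) \<in> D \<or> (a,b) \<in> U \<or>
       (\<exists>g1 g2. (a,g1) \<in> D \<and> (b,g2) \<in> D \<and> (g1,g2) \<in> U\<^sup>*))}"

definition separates :: "('a \<times> 'a) set \<Rightarrow> 'a set \<Rightarrow> 'a set \<Rightarrow> 'a set \<Rightarrow> bool" where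
  "separates E S A B \<longleftrightarrow>
     (\<forall>a\<in>A. \<forall>b\<in>B. (a,b) \<notin> (E \<inter> ((- S) \<times> (- S)))\<^sup>*)"

definition c_separates :: "('a \<times> 'a) set \<Rightarrow> ('a \<times> 'a) set \<Rightarrow> 'a set \<Rightarrow> 'a set \<Rightarrow> 'a set \<Rightarrow> bool" where
  "c_separates D U A B S \<longleftrightarrow>
     (let W = An D U (A \<union> B \<union> S)
      in separates (moral_edges W (D \<inter> (W \<times> W)) (U \<inter> (W \<times> W))) S A B)"

text \<open>Faithfulness of the conditional independence relation CI (CI A B S means
  A is independent of B given S in p) to the chain graph (V,D,U).\<close>
definition faithful :: "'a set \<Rightarrow> ('a \<times> 'a) set \<Rightarrow> ('a \<times> 'a) set \<Rightarrow>
                       ('a set \<Rightarrow> 'a set \<Rightarrow> 'a set \<Rightarrow> bool) \<Rightarrow> bool" where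
  "faithful V D U CI \<longleftrightarrow>
     (\<forall>A B S. A \<subseteq> V \<and> B \<subseteq> V \<and> S \<subseteq> V \<and> A \<inter> B = {} \<and> A \<inter> S = {} \<and> B \<inter> S = {} \<longrightarrow>
        (CI A B S \<longleftrightarrow> c_separates D U A B S))"

text \<open>Skeleton recovery of PC4LWF. H is a symmetric edge set.\<close>
definition adj :: "('a \<times> 'a) set \<Rightarrow> 'a \<Rightarrow> 'a set" where
  "adj H x = {y. (x,y) \<in> H}"

definition complete_graph :: "'a set \<Rightarrow> ('a \<times> 'a) set" where
  "complete_graph V = {(u,v). u \<in> V \<and> v \<in> V \<and> u \<noteq> v}"

text \<open>One iteration of the while loop at level i. The state is (H, T), T being the
  ordered pairs already selected at this level.\<close>
inductive level_step :: "('a set \<Rightarrow> 'a set \<Rightarrow> 'a set \<Rightarrow> bool) \<Rightarrow> nat \<Rightarrow>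
    ('a \<times> 'a) set \<times> ('a \<times> 'a) set \<Rightarrow> ('a \<times> 'a) set \<times> ('a \<times> 'a) set \<Rightarrow> bool"
  for CI i where
  remove: "\<lbrakk> (u,v) \<in> H; (u,v) \<notin> T; card (adj H u - {v}) \<ge> i;
            S \<subseteq> adj H u - {v}; card S = i; CI {u} {v} S \<rbrakk>
           \<Longrightarrow> level_step CI i (H, T) (H - {(u,v),(v,u)}, insert (u,v) T)"
| keep: "\<lbrakk> (u,v) \<in> H; (u,v) \<notin> T; card (adj H u - {v}) \<ge> i;
          \<not> (\<exists>S. S \<subseteq> adj H u - {v} \<and> card S = i \<and> CI {u} {v} S) \<rbrakk>
           \<Longrightarrow> level_step CI i (H, T) (H, insert (u,v) T)"

definition level_done :: "nat \<Rightarrow> ('a \<times> 'a) set \<Rightarrow> ('a \<times> 'a) set \<Rightarrow> bool" where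
  "level_done i H T \<longleftrightarrow> (\<forall>u v. (u,v) \<in> H \<and> card (adj H u - {v}) \<ge> i \<longrightarrow> (u,v) \<in> T)"

definition level_run :: "('a set \<Rightarrow> 'a set \<Rightarrow> 'a set \<Rightarrow> bool) \<Rightarrow> nat \<Rightarrow>
    ('a \<times> 'a) set \<Rightarrow> ('a \<times> 'a) set \<Rightarrow> bool" where
  "level_run CI i H H' \<longleftrightarrow>
     (\<exists>T. (level_step CI i)\<^sup>*\<^sup>* (H, {}) (H', T) \<and> level_done i H' T)"

text \<open>skel_run V CI k H: H is a possible state after levels 0, ..., k-1.\<close>
inductive skel_run :: "'a set \<Rightarrow> ('a set \<Rightarrow> 'a set \<Rightarrow> 'a set \<Rightarrow> bool) \<Rightarrow> nat \<Rightarrow>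
    ('a \<times> 'a) set \<Rightarrow> bool"
  for V CI where
  init: "skel_run V CI 0 (complete_graph V)"
| level: "\<lbrakk> skel_run V CI k H; level_run CI k H H' \<rbrakk> \<Longrightarrow> skel_run V CI (Suc k) H'"

text \<open>Possible outputs of the skeleton phase: levels i = 0, ..., |V| - 2.\<close>
definition pc4lwf_skeleton :: "'a set \<Rightarrow> ('a set \<Rightarrow> 'a set \<Rightarrow> 'a set \<Rightarrow> bool) \<Rightarrow>
    ('a \<times> 'a) set \<Rightarrow> bool" where
  "pc4lwf_skeleton V CI H \<longleftrightarrow> skel_run V CI (card V - 1) H"

end

theory Submission
  imports Defs "HOL-Library.Transitive_Closure_Table"
begin

text \<open>Edges of G are never removed: adjacent vertices stay adjacent in every moral graph
  containing them, so no set c-separates them and, by faithfulness, no test succeeds.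
  Conversely, let u, v be non-adjacent. As G has no partially directed cycle, we may
  choose the labels so that v is not reachable from u along a path starting with an
  arrow out of u. Then no child of u lies in An({u,v} \<union> bd(u)), so the moral neighbours
  of u there all lie in bd(u), which therefore c-separates u from v. Since edges of G
  survive, bd(u) \<subseteq> adj_H(u) - {v} throughout, and at level |bd(u)| \<le> |V| - 2 the pair
  (u,v) is tested with bd(u) among the candidate sets, so the edge u - v is removed.\<close>

definition skeleton :: "('a \<times> 'a) set \<Rightarrow> ('a \<times> 'a) set \<Rightarrow> ('a \<times> 'a) set" where
  "skeleton D U = {(u,v). (u,v) \<in> D \<or> (v,u) \<in> D \<or> (u,v) \<in> U}"

definition strict_desc :: "('a \<times> 'a) set \<Rightarrow> ('a \<times> 'a) set \<Rightarrow> 'a \<Rightarrow> 'a \<Rightarrow> bool" where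
  "strict_desc D U u v \<longleftrightarrow> (\<exists>c. (u,c) \<in> D \<and> (c,v) \<in> (D \<union> U)\<^sup>*)"

lemma lwf_cgD:
  assumes "lwf_cg V D U"
  shows "D \<subseteq> V \<times> V" "U \<subseteq> V \<times> V" "sym U" "(v,v) \<notin> D" "(v,v) \<notin> U"
    and "(u,w) \<in> D \<Longrightarrow> (w,u) \<notin> D \<and> (u,w) \<notin> U" "\<not> has_pd_cycle D U"
  using assms unfolding lwf_cg_def by auto

lemma skeleton_sym: "lwf_cg V D U \<Longrightarrow> sym (skeleton D U)"
  using lwf_cgD(3) unfolding skeleton_def sym_def by blast

lemma skeleton_subset_complete_graph:
  assumes "lwf_cg V D U"
  shows "skeleton D U \<subseteq> complete_graph V"
proof
  fix p assume "p \<in> skeleton D U"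
  then obtain u v where "p = (u,v)" and "(u,v) \<in> D \<or> (v,u) \<in> D \<or> (u,v) \<in> U"
    unfolding skeleton_def by blast
  then show "p \<in> complete_graph V"
    using lwf_cgD(1,2,4,5)[OF assms] unfolding complete_graph_def by auto
qed

lemma bd_singleton_iff [simp]: "b \<in> bd D U {u} \<longleftrightarrow> b \<noteq> u \<and> ((b,u) \<in> D \<or> (b,u) \<in> U)"
  unfolding bd_def by simp

lemma bd_subset_if_nonadjacent:
  assumes "lwf_cg V D U" and "(u,v) \<notin> skeleton D U"
  shows "bd D U {u} \<subseteq> V - {u,v}"
  using assms lwf_cgD(1-3)[OF assms(1)] unfolding skeleton_def by (auto dest: symD)

lemma has_pd_cycleI:
  assumes path: "rtrancl_path (\<lambda>a b. (a,b) \<in> D \<union> U) g xs u"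
    and dist: "distinct (g # xs)" and len: "length xs \<ge> 2" and ug: "(u,g) \<in> D"
  shows "has_pd_cycle D U"
  unfolding has_pd_cycle_def
proof (intro exI[of _ "g # xs"] conjI)
  let ?vs = "g # xs"
  let ?next = "\<lambda>i. ?vs ! ((i+1) mod length ?vs)"
  have last: "?vs ! length xs = u"
    using rtrancl_path_last[OF path] len by (auto simp: last_conv_nth nth_Cons')
  have wrap: "?next (length xs) = g"
    by simp
  show "\<forall>i<length ?vs. (?vs!i, ?next i) \<in> U \<or> (?vs!i, ?next i) \<in> D"
  proof (intro allI impI)
    fix i assume "i < length ?vs"
    then consider "i < length xs" | "i = length xs" by fastforce
    then show "(?vs!i, ?next i) \<in> U \<or> (?vs!i, ?next i) \<in> D"
    proof cases
      case 1
      then have "?next i = xs ! i" by simp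
      then show ?thesis using rtrancl_path_nth[OF path 1] by (simp only:) blast
    next
      case 2
      with last wrap ug show ?thesis by (simp only:) blast
    qed
  qed
  show "\<exists>i<length ?vs. (?vs!i, ?next i) \<in> D"
    using last wrap ug by (intro exI[of _ "length xs"]) (simp only: length_Cons lessI)
  show "3 \<le> length ?vs" using len by simp
  show "distinct ?vs" by (fact dist)
qed

lemma lwf_cg_no_path_back:
  assumes lwf: "lwf_cg V D U" and ug: "(u,g) \<in> D"
  shows "(g,u) \<notin> (D \<union> U)\<^sup>*"
proof
  assume "(g,u) \<in> (D \<union> U)\<^sup>*"
  then have "(\<lambda>a b. (a,b) \<in> D \<union> U)\<^sup>*\<^sup>* g u"
    by (simp add: rtranclp_rtrancl_eq del: Un_iff)
  then obtain xs0 where "rtrancl_path (\<lambda>a b. (a,b) \<in> D \<union> U) g xs0 u"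
    unfolding rtranclp_eq_rtrancl_path by blast
  then obtain xs where path: "rtrancl_path (\<lambda>a b. (a,b) \<in> D \<union> U) g xs u"
    and dist: "distinct (g # xs)"
    by (rule rtrancl_path_distinct)
  have "xs = [] \<or> xs = [u] \<or> length xs \<ge> 2"
  proof (cases xs)
    case (Cons y ys)
    then show ?thesis using rtrancl_path_last[OF path] by (cases ys) auto
  qed simp
  then consider "xs = []" | "xs = [u]" | "length xs \<ge> 2" by blast
  then show False
  proof cases
    case 1
    from path[unfolded 1] have "g = u" by (cases rule: rtrancl_path.cases) simp_all
    then show False using ug lwf_cgD(4)[OF lwf] by simp
  next
    case 2 \<comment> \<open>a 2-cycle: excluded by the edge axioms, not by the cycle condition (length \<ge> 3)\<close>
    then have "(g,u) \<in> D \<union> U" using rtrancl_path_nth[OF path, of 0] by simp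
    then show False using lwf_cgD(6)[OF lwf ug] symD[OF lwf_cgD(3)[OF lwf]] by blast
  next
    case 3
    then show False using has_pd_cycleI[OF path dist _ ug] lwf_cgD(7)[OF lwf] by blast
  qed
qed

lemma strict_desc_asym:
  assumes "lwf_cg V D U" and "strict_desc D U u v"
  shows "\<not> strict_desc D U v u"
proof
  assume "strict_desc D U v u"
  then obtain c c' where "(u,c) \<in> D" and cv: "(c,v) \<in> (D \<union> U)\<^sup>*"
    and "(v,c') \<in> D" and c'u: "(c',u) \<in> (D \<union> U)\<^sup>*"
    using assms(2) unfolding strict_desc_def by blast
  have "(v,u) \<in> (D \<union> U)\<^sup>*"
    using \<open>(v,c') \<in> D\<close> c'u by (blast intro: converse_rtrancl_into_rtrancl)
  with cv have "(c,u) \<in> (D \<union> U)\<^sup>*" by (rule rtrancl_trans)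
  with lwf_cg_no_path_back[OF assms(1) \<open>(u,c) \<in> D\<close>] show False by blast
qed

lemma An_subset_ancestors: "An D U A \<subseteq> {x. \<exists>a\<in>A. (x,a) \<in> (D \<union> U)\<^sup>*}"
  unfolding An_def
proof (rule Inter_lower, safe)
  fix a assume "a \<in> A"
  then show "\<exists>b\<in>A. (a,b) \<in> (D \<union> U)\<^sup>*" by blast
next
  fix b c a assume "a \<in> A" "(b,a) \<in> (D \<union> U)\<^sup>*" "c \<in> bd D U {b}"
  then show "\<exists>a\<in>A. (c,a) \<in> (D \<union> U)\<^sup>*"
    by (auto intro: converse_rtrancl_into_rtrancl)
qed

lemma subset_An: "A \<subseteq> An D U A"
  unfolding An_def by blast

lemma c_separates_bd:
  assumes lwf: "lwf_cg V D U" and "u \<noteq> v" and "v \<notin> bd D U {u}"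
    and not_desc: "\<not> strict_desc D U u v"
  shows "c_separates D U {u} {v} (bd D U {u})"
proof -
  define S where "S = bd D U {u}"
  define W where "W = An D U ({u} \<union> {v} \<union> S)"
  define E where "E = moral_edges W (D \<inter> (W \<times> W)) (U \<inter> (W \<times> W))"
  have child_notin_W: "c \<notin> W" if uc: "(u,c) \<in> D" for c
  proof
    assume "c \<in> W"
    with An_subset_ancestors[of D U "{u} \<union> {v} \<union> S"]
    obtain a where a: "a \<in> {u} \<union> {v} \<union> S" and ca: "(c,a) \<in> (D \<union> U)\<^sup>*"
      unfolding W_def by blast
    have "a \<noteq> v"
    proof
      assume "a = v"
      with uc ca have "strict_desc D U u v" unfolding strict_desc_def by blast
      with not_desc show False ..
    qed
    with a consider "a = u" | "(a,u) \<in> D \<union> U"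
      unfolding S_def by auto
    then have "(c,u) \<in> (D \<union> U)\<^sup>*"
    proof cases
      case 2
      with ca show ?thesis by (rule rtrancl_into_rtrancl)
    qed (use ca in simp)
    with lwf_cg_no_path_back[OF lwf uc] show False ..
  qed
  have moral_nbr: "x \<in> S" if "(u,x) \<in> E" for x
  proof -
    have "(x,u) \<in> D \<or> (u,x) \<in> U"
      using that child_notin_W unfolding E_def moral_edges_def by blast
    moreover have "x \<noteq> u"
      using that unfolding E_def moral_edges_def by blast
    ultimately show "x \<in> S"
      using symD[OF lwf_cgD(3)[OF lwf]] unfolding S_def by auto
  qed
  have "(u,v) \<notin> (E \<inter> (- S) \<times> (- S))\<^sup>*"
  proof
    assume "(u,v) \<in> (E \<inter> (- S) \<times> (- S))\<^sup>*"
    then show False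
      using \<open>u \<noteq> v\<close> moral_nbr by (cases rule: converse_rtranclE) blast+
  qed
  then show ?thesis
    unfolding c_separates_def separates_def Let_def
      S_def[symmetric] W_def[symmetric] E_def[symmetric] by blast
qed

lemma skeleton_not_c_separates:
  assumes "(u,v) \<in> skeleton D U" and "u \<noteq> v" and "u \<notin> S" and "v \<notin> S"
  shows "\<not> c_separates D U {u} {v} S"
proof -
  define W where "W = An D U ({u} \<union> {v} \<union> S)"
  define E where "E = moral_edges W (D \<inter> (W \<times> W)) (U \<inter> (W \<times> W))"
  have "u \<in> W" "v \<in> W"
    using subset_An[of "{u} \<union> {v} \<union> S" D U] unfolding W_def by blast+
  then have "(u,v) \<in> E"
    using assms(1,2) unfolding E_def moral_edges_def skeleton_def by blast
  then have "(u,v) \<in> (E \<inter> (- S) \<times> (- S))\<^sup>*"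
    using assms(3,4) by blast
  then show ?thesis
    unfolding c_separates_def separates_def Let_def W_def[symmetric] E_def[symmetric] by blast
qed

lemma faithfulD:
  assumes "faithful V D U CI" and "A \<subseteq> V" "B \<subseteq> V" "S \<subseteq> V"
    and "A \<inter> B = {}" "A \<inter> S = {}" "B \<inter> S = {}"
  shows "CI A B S \<longleftrightarrow> c_separates D U A B S"
  using assms unfolding faithful_def by simp

lemma faithful_pairD:
  assumes "faithful V D U CI" and "u \<in> V" "v \<in> V" "u \<noteq> v" and "S \<subseteq> V - {u,v}"
  shows "CI {u} {v} S \<longleftrightarrow> c_separates D U {u} {v} S"
  using assms(2-5) by (intro faithfulD[OF assms(1)]) auto

lemma CI_bd:
  assumes lwf: "lwf_cg V D U" and "faithful V D U CI"
    and "u \<in> V" "v \<in> V" "u \<noteq> v" and "(u,v) \<notin> skeleton D U"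
    and "\<not> strict_desc D U u v"
  shows "CI {u} {v} (bd D U {u})"
proof -
  have "bd D U {u} \<subseteq> V - {u,v}"
    using bd_subset_if_nonadjacent[OF lwf] assms(6) .
  moreover have "c_separates D U {u} {v} (bd D U {u})"
    using c_separates_bd[OF lwf] assms(5,7) calculation by blast
  ultimately show ?thesis
    using faithful_pairD[OF assms(2-5)] by blast
qed

lemma CI_imp_nonadjacent:
  assumes "faithful V D U CI" and "u \<in> V" "v \<in> V" "u \<noteq> v" and "S \<subseteq> V - {u,v}"
    and "CI {u} {v} S"
  shows "(u,v) \<notin> skeleton D U"
proof -
  have "c_separates D U {u} {v} S"
    using faithful_pairD[OF assms(1-5)] assms(6) by simp
  moreover have "u \<notin> S" "v \<notin> S"
    using assms(5) by auto
  ultimately show ?thesis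
    using skeleton_not_c_separates[of u v D U S] assms(4) by blast
qed

lemma card_bd_less:
  assumes "lwf_cg V D U" and "finite V" and "u \<in> V" "v \<in> V" "u \<noteq> v"
    and "(u,v) \<notin> skeleton D U"
  shows "card (bd D U {u}) < card V - 1"
proof -
  have "card (bd D U {u}) \<le> card (V - {u,v})"
    using bd_subset_if_nonadjacent[OF assms(1,6)] assms(2) by (intro card_mono) auto
  also have "\<dots> = card V - 2"
    using assms(2-5) by (simp add: card_Diff_subset)
  finally have "card (bd D U {u}) \<le> card V - 2" .
  moreover have "card V \<ge> 2"
    using card_mono[OF assms(2), of "{u,v}"] assms(3-5) by simp
  ultimately show ?thesis by linarith
qed

definition bd_separable :: "('a \<times> 'a) set \<Rightarrow> ('a \<times> 'a) set \<Rightarrow> nat \<Rightarrow> 'a \<Rightarrow> 'a \<Rightarrow> bool" where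
  "bd_separable D U k u v \<longleftrightarrow>
     (u,v) \<notin> skeleton D U \<and> \<not> strict_desc D U u v \<and> card (bd D U {u}) = k"

definition skeleton_inv :: "'a set \<Rightarrow> ('a \<times> 'a) set \<Rightarrow> ('a \<times> 'a) set \<Rightarrow> nat \<Rightarrow> ('a \<times> 'a) set \<Rightarrow> bool" where
  "skeleton_inv V D U k H \<longleftrightarrow> skeleton D U \<subseteq> H \<and> H \<subseteq> complete_graph V \<and> sym H \<and>
     (\<forall>j<k. \<forall>u v. bd_separable D U j u v \<longrightarrow> (u,v) \<notin> H)"

definition level_inv :: "'a set \<Rightarrow> ('a \<times> 'a) set \<Rightarrow> ('a \<times> 'a) set \<Rightarrow> nat \<Rightarrow>
    ('a \<times> 'a) set \<Rightarrow> ('a \<times> 'a) set \<Rightarrow> bool" where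
  "level_inv V D U k H T \<longleftrightarrow> skeleton_inv V D U k H \<and>
     (\<forall>(u,v)\<in>T. bd_separable D U k u v \<longrightarrow> (u,v) \<notin> H)"

lemma adj_subset_complete_graph: "H \<subseteq> complete_graph V \<Longrightarrow> adj H u - {v} \<subseteq> V - {u,v}"
  unfolding adj_def complete_graph_def by blast

lemma bd_subset_adj:
  assumes lwf: "lwf_cg V D U" and "skeleton D U \<subseteq> H" and "(u,v) \<notin> skeleton D U"
  shows "bd D U {u} \<subseteq> adj H u - {v}"
proof
  fix b assume b: "b \<in> bd D U {u}"
  then have "(u,b) \<in> skeleton D U"
    using symD[OF lwf_cgD(3)[OF lwf]] unfolding skeleton_def by auto
  then have "b \<in> adj H u"
    using assms(2) unfolding adj_def by blast
  moreover have "b \<noteq> v"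
    using b bd_subset_if_nonadjacent[OF lwf assms(3)] by blast
  ultimately show "b \<in> adj H u - {v}" by blast
qed

lemma level_step_level_inv:
  assumes lwf: "lwf_cg V D U" and fa: "faithful V D U CI"
    and step: "level_step CI k (H,T) (H',T')" and inv: "level_inv V D U k H T"
  shows "level_inv V D U k H' T'"
proof -
  have sk: "skeleton D U \<subseteq> H" and HV: "H \<subseteq> complete_graph V" and "sym H"
    and old: "\<forall>j<k. \<forall>u v. bd_separable D U j u v \<longrightarrow> (u,v) \<notin> H"
    and sel: "\<forall>(u,v)\<in>T. bd_separable D U k u v \<longrightarrow> (u,v) \<notin> H"
    using inv unfolding level_inv_def skeleton_inv_def by auto
  from step show ?thesis
  proof cases
    case (remove u v S)
    have uv: "u \<in> V" "v \<in> V" "u \<noteq> v"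
      using HV \<open>(u,v) \<in> H\<close> unfolding complete_graph_def by auto
    have "S \<subseteq> V - {u,v}"
      using \<open>S \<subseteq> adj H u - {v}\<close> adj_subset_complete_graph[OF HV] by blast
    then have "(u,v) \<notin> skeleton D U"
      using CI_imp_nonadjacent[OF fa uv] \<open>CI {u} {v} S\<close> by blast
    moreover have "(v,u) \<notin> skeleton D U"
      using calculation symD[OF skeleton_sym[OF lwf]] by blast
    ultimately have "skeleton D U \<subseteq> H'"
      using sk remove(1) by blast
    moreover have "H' \<subseteq> complete_graph V" "sym H'"
      using HV \<open>sym H\<close> remove(1) unfolding sym_def by auto
    ultimately show ?thesis
      using old sel remove(1,2) unfolding level_inv_def skeleton_inv_def by auto
  next
    case (keep u v)
    have uv: "u \<in> V" "v \<in> V" "u \<noteq> v"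
      using HV \<open>(u,v) \<in> H\<close> unfolding complete_graph_def by auto
    have "\<not> bd_separable D U k u v"
    proof
      assume sep: "bd_separable D U k u v"
      then have "CI {u} {v} (bd D U {u})"
        using CI_bd[OF lwf fa uv] unfolding bd_separable_def by blast
      moreover have "bd D U {u} \<subseteq> adj H u - {v}"
        using bd_subset_adj[OF lwf sk] sep unfolding bd_separable_def by blast
      ultimately show False
        using keep(6) sep unfolding bd_separable_def by blast
    qed
    then show ?thesis
      using inv keep(1,2) unfolding level_inv_def by auto
  qed
qed

lemma level_run_skeleton_inv:
  assumes lwf: "lwf_cg V D U" and fa: "faithful V D U CI" and fin: "finite V"
    and inv: "skeleton_inv V D U k H" and run: "level_run CI k H H'"
  shows "skeleton_inv V D U (Suc k) H'"
proof -
  obtain T where steps: "(level_step CI k)\<^sup>*\<^sup>* (H, {}) (H', T)" and finished: "level_done k H' T"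
    using run unfolding level_run_def by blast
  have "level_inv V D U k H' T"
    using steps
  proof (induction rule: rtranclp_induct2)
    case refl
    then show ?case using inv unfolding level_inv_def by simp
  next
    case (step H1 T1 H2 T2)
    then show ?case using level_step_level_inv[OF lwf fa] by blast
  qed
  then have inv': "skeleton_inv V D U k H'"
    and sel: "\<forall>(u,v)\<in>T. bd_separable D U k u v \<longrightarrow> (u,v) \<notin> H'"
    unfolding level_inv_def by auto
  have "(u,v) \<notin> H'" if sep: "bd_separable D U k u v" for u v
  proof
    assume uv: "(u,v) \<in> H'"
    have sk: "skeleton D U \<subseteq> H'" and HV: "H' \<subseteq> complete_graph V"
      using inv' unfolding skeleton_inv_def by auto
    have "finite (adj H' u - {v})"
      using finite_subset[OF adj_subset_complete_graph[OF HV] finite_Diff[OF fin]] .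
    moreover have "bd D U {u} \<subseteq> adj H' u - {v}"
      using bd_subset_adj[OF lwf sk] sep unfolding bd_separable_def by blast
    ultimately have "card (adj H' u - {v}) \<ge> k"
      using card_mono sep unfolding bd_separable_def by metis
    with finished uv have "(u,v) \<in> T"
      unfolding level_done_def by blast
    with sel sep uv show False by blast
  qed
  with inv' show ?thesis
    unfolding skeleton_inv_def less_Suc_eq by blast
qed

lemma skel_run_skeleton_inv:
  assumes lwf: "lwf_cg V D U" and fa: "faithful V D U CI" and fin: "finite V"
  shows "skel_run V CI k H \<Longrightarrow> skeleton_inv V D U k H"
proof (induction rule: skel_run.induct)
  case init
  have "sym (complete_graph V)"
    unfolding sym_def complete_graph_def by blast
  then show ?case
    using skeleton_subset_complete_graph[OF lwf] unfolding skeleton_inv_def by blast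
next
  case (level k H H')
  then show ?case using level_run_skeleton_inv[OF lwf fa fin] by blast
qed

lemma skeleton_inv_imp_eq_skeleton:
  assumes lwf: "lwf_cg V D U" and fin: "finite V"
    and inv: "skeleton_inv V D U (card V - 1) H"
  shows "H = skeleton D U"
proof
  have HV: "H \<subseteq> complete_graph V" and "sym H"
    and removed: "\<And>j u v. j < card V - 1 \<Longrightarrow> bd_separable D U j u v \<Longrightarrow> (u,v) \<notin> H"
    using inv unfolding skeleton_inv_def by auto
  have removed_pair: "(u,v) \<notin> H"
    if "u \<in> V" "v \<in> V" "u \<noteq> v" "(u,v) \<notin> skeleton D U" "\<not> strict_desc D U u v" for u v
    using removed[OF card_bd_less[OF lwf fin that(1-4)]] that(4,5)
    unfolding bd_separable_def by blast
  show "H \<subseteq> skeleton D U"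
  proof (rule subrelI, rule ccontr)
    fix u v assume uv: "(u,v) \<in> H" and nonadj: "(u,v) \<notin> skeleton D U"
    have "u \<in> V" "v \<in> V" "u \<noteq> v"
      using HV uv unfolding complete_graph_def by auto
    moreover have "(v,u) \<notin> skeleton D U"
      using nonadj symD[OF skeleton_sym[OF lwf]] by blast
    moreover have "(v,u) \<in> H"
      using \<open>sym H\<close> uv by (rule symD)
    ultimately show False
      using removed_pair[of u v] removed_pair[of v u] uv nonadj strict_desc_asym[OF lwf, of u v]
      by blast
  qed
  show "skeleton D U \<subseteq> H"
    using inv unfolding skeleton_inv_def by blast
qed

theorem lemma1:
  fixes V :: "'a set" and D U :: "('a \<times> 'a) set"
    and CI :: "'a set \<Rightarrow> 'a set \<Rightarrow> 'a set \<Rightarrow> bool"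
    and H :: "('a \<times> 'a) set"
  assumes "finite V"
    and "lwf_cg V D U"
    and "faithful V D U CI"
    and "pc4lwf_skeleton V CI H"
  shows "H = {(u,v). (u,v) \<in> D \<or> (v,u) \<in> D \<or> (u,v) \<in> U}"
proof -
  have "skeleton_inv V D U (card V - 1) H"
    using skel_run_skeleton_inv[OF assms(2,3,1)] assms(4)
    unfolding pc4lwf_skeleton_def by blast
  with assms(2,1) have "H = skeleton D U"
    by (rule skeleton_inv_imp_eq_skeleton)
  then show ?thesis
    unfolding skeleton_def .
qed

end
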